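(* For all integers $f,n\ge0$ with $(f,n)\neq(0,0)$, one has $T_{0,0}(q)=1$ and $$T_{f,n}(q)=T_{f,n-1}(q)+\{n+1\}\,T_{f-1,n+1}(q),$$ where $T_{f,n}(q)$ is interpreted as $0$ if $f$ or $n$ is negative.
   Context: For $f,n\ge0$, a chord diagram with $f$ free chords and $n$ tethered chords is described combinatorially as follows: take $2f+n$ points on a circle labelled $1,2,\dots,2f+n$ in clockwise order starting after a fixed basepoint; choose an $n$-element subset of these points (the endpoints of the tethered chords, each joined by a chord to the basepoint) and a perfect matching of the remaining $2f$ points into $f$ free chords. The number of crossings of such a diagram is the number of pairs of free chords $\{a<b\},\{c<d\}$ with $a<c<b<d$, plus the number of pairs (tethered endpoint $p$, free chord $\{a<b\}$) with $a<p<b$. Let $N(f,n,c)$ be the number of such diagrams with $c$ crossings and $T_{f,n}(q):=\sum_cN(f,n,c)q^c\in\mathbb N[q]$. Also $\{m\}:=1+q+\cdots+q^{m-1}$ is the classical $q$-integer. *)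

theory Defs
  imports "HOL-Computational_Algebra.Polynomial"
begin

definition perfect_matching :: "(nat \<times> nat) set \<Rightarrow> nat set \<Rightarrow> bool" where
  "perfect_matching M P \<longleftrightarrow>
     (\<forall>(a,b)\<in>M. a < b \<and> a \<in> P \<and> b \<in> P) \<and>
     (\<forall>x\<in>P. \<exists>!e. e \<in> M \<and> (x = fst e \<or> x = snd e))"

text \<open>Chord diagrams with f free and n tethered chords: (S, M) with S the tethered endpoints.\<close>
definition chord_diagrams :: "nat \<Rightarrow> nat \<Rightarrow> (nat set \<times> (nat \<times> nat) set) set" where
  "chord_diagrams f n = {(S, M). S \<subseteq> {1..2*f+n} \<and> card S = n \<and>
       perfect_matching M ({1..2*f+n} - S)}"

definition crossings :: "nat set \<times> (nat \<times> nat) set \<Rightarrow> nat" where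
  "crossings D = (case D of (S, M) \<Rightarrow>
      card {(e1, e2). e1 \<in> M \<and> e2 \<in> M \<and> fst e1 < fst e2 \<and> fst e2 < snd e1 \<and> snd e1 < snd e2}
    + card {(p, e). p \<in> S \<and> e \<in> M \<and> fst e < p \<and> p < snd e})"

definition T :: "nat \<Rightarrow> nat \<Rightarrow> nat poly" where
  "T f n = (\<Sum>D\<in>chord_diagrams f n. monom 1 (crossings D))"

definition qint :: "nat \<Rightarrow> nat poly" where
  "qint m = (\<Sum>i<m. monom 1 i)"

end

theory Submission
  imports Defs
begin

text \<open>Classify the diagrams by the last point \<open>N = 2f + n\<close>. If it is tethered, removing
  that tether leaves a diagram with \<open>f\<close> free and \<open>n - 1\<close> tethered chords and the same
  crossings, since no free chord passes over \<open>N\<close>. Otherwise \<open>N\<close> is the right end of a free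
  chord \<open>(a, N)\<close>; replacing it by a tether at \<open>a\<close> gives a diagram with \<open>f - 1\<close> free and
  \<open>n + 1\<close> tethered chords plus a marked tethered point \<open>a\<close>, and this loses exactly one
  crossing for every tethered point to the right of \<open>a\<close>. As \<open>a\<close> runs over the \<open>n + 1\<close>
  tethered points, these losses contribute the factor \<open>1 + q + \<dots> + q\<^sup>n = {n+1}\<close>.\<close>

lemma perfect_matching_chord:
  "perfect_matching M P \<Longrightarrow> (a, b) \<in> M \<Longrightarrow> a < b \<and> a \<in> P \<and> b \<in> P"
  by (auto simp: perfect_matching_def)

lemma perfect_matching_cover:
  "perfect_matching M P \<Longrightarrow> x \<in> P \<Longrightarrow> \<exists>e\<in>M. x = fst e \<or> x = snd e"
  unfolding perfect_matching_def by blast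

lemma perfect_matching_unique_chord:
  assumes "perfect_matching M P" "e \<in> M" "e' \<in> M"
    and "x = fst e \<or> x = snd e" "x = fst e' \<or> x = snd e'"
  shows "e = e'"
proof -
  have "x \<in> P"
    using assms(1,2,4) perfect_matching_chord[of M P "fst e" "snd e"] by auto
  then show ?thesis
    using assms unfolding perfect_matching_def by blast
qed

lemma perfect_matchingI:
  assumes "\<And>a b. (a, b) \<in> M \<Longrightarrow> a < b \<and> a \<in> P \<and> b \<in> P"
    and "\<And>x. x \<in> P \<Longrightarrow> \<exists>e\<in>M. x = fst e \<or> x = snd e"
    and "\<And>e e' x. e \<in> M \<Longrightarrow> e' \<in> M \<Longrightarrow> x = fst e \<or> x = snd e \<Longrightarrow>
           x = fst e' \<or> x = snd e' \<Longrightarrow> e = e'"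
  shows "perfect_matching M P"
  unfolding perfect_matching_def
proof (intro conjI ballI)
  fix e assume "e \<in> M"
  then show "case e of (a, b) \<Rightarrow> a < b \<and> a \<in> P \<and> b \<in> P"
    using assms(1) by (cases e) simp
next
  fix x assume "x \<in> P"
  then show "\<exists>!e. e \<in> M \<and> (x = fst e \<or> x = snd e)"
    using assms(2,3) by blast
qed

lemma perfect_matching_subset: "perfect_matching M P \<Longrightarrow> M \<subseteq> P \<times> P"
  by (auto simp: perfect_matching_def)

lemma perfect_matching_Diff:
  assumes pm: "perfect_matching M P" and ab: "(a, b) \<in> M"
  shows "perfect_matching (M - {(a, b)}) (P - {a, b})"
proof (rule perfect_matchingI)
  fix c d assume cd: "(c, d) \<in> M - {(a, b)}"
  have "x \<notin> {a, b}" if "x = c \<or> x = d" for x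
    using perfect_matching_unique_chord[OF pm ab, of "(c, d)" x] cd that by auto
  then show "c < d \<and> c \<in> P - {a, b} \<and> d \<in> P - {a, b}"
    using perfect_matching_chord[OF pm, of c d] cd by auto
next
  fix x assume x: "x \<in> P - {a, b}"
  then obtain e where "e \<in> M" "x = fst e \<or> x = snd e"
    using perfect_matching_cover[OF pm] by blast
  moreover from this have "e \<noteq> (a, b)" using x by auto
  ultimately show "\<exists>e\<in>M - {(a, b)}. x = fst e \<or> x = snd e" by blast
next
  show "e = e'" if "e \<in> M - {(a, b)}" "e' \<in> M - {(a, b)}"
    "x = fst e \<or> x = snd e" "x = fst e' \<or> x = snd e'" for e e' x
    using perfect_matching_unique_chord[OF pm] that by blast
qed

lemma perfect_matching_insert:
  assumes pm: "perfect_matching M P" and "a < b" "a \<notin> P" "b \<notin> P"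
  shows "perfect_matching (insert (a, b) M) (insert a (insert b P))"
proof (rule perfect_matchingI)
  have outside: "x \<noteq> fst e \<and> x \<noteq> snd e" if "e \<in> M" "x \<in> {a, b}" for e x
    using that assms perfect_matching_chord[OF pm, of "fst e" "snd e"] by auto
  show "e = e'" if "e \<in> insert (a, b) M" "e' \<in> insert (a, b) M"
    "x = fst e \<or> x = snd e" "x = fst e' \<or> x = snd e'" for e e' x
    using that outside perfect_matching_unique_chord[OF pm] by (metis fst_conv snd_conv insertCI insertE)
qed (use assms perfect_matching_chord perfect_matching_cover in auto)

lemma qint_Suc: "qint (Suc m) = qint m + monom 1 m"
  by (simp add: qint_def)

lemma sum_monom_card_greater:
  fixes S :: "'a::linorder set"
  assumes "finite S"
  shows "(\<Sum>a\<in>S. monom 1 (card {p\<in>S. a < p})) = qint (card S)"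
  using assms
proof (induction S rule: finite_linorder_min_induct)
  case empty
  then show ?case by (simp add: qint_def)
next
  case (insert b A)
  have "b \<notin> A" using insert.hyps(2) by blast
  have above_b: "{p \<in> insert b A. b < p} = A" using insert.hyps(2) by auto
  have "{p \<in> insert b A. a < p} = {p \<in> A. a < p}" if "a \<in> A" for a
    using insert.hyps(2) that by auto
  then have "(\<Sum>a\<in>insert b A. monom 1 (card {p \<in> insert b A. a < p}))
      = monom 1 (card A) + (\<Sum>a\<in>A. monom 1 (card {p \<in> A. a < p}))"
    using insert.hyps(1) \<open>b \<notin> A\<close> above_b by simp
  also have "\<dots> = qint (card (insert b A))"
    using insert.IH insert.hyps(1) \<open>b \<notin> A\<close> by (simp add: qint_Suc add.commute)
  finally show ?case .
qed

definition free_crossings :: "(nat \<times> nat) set \<Rightarrow> ((nat \<times> nat) \<times> (nat \<times> nat)) set" where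
  "free_crossings M = {(e1, e2). e1 \<in> M \<and> e2 \<in> M \<and> fst e1 < fst e2 \<and> fst e2 < snd e1 \<and> snd e1 < snd e2}"

definition tether_crossings :: "nat set \<Rightarrow> (nat \<times> nat) set \<Rightarrow> (nat \<times> (nat \<times> nat)) set" where
  "tether_crossings S M = {(p, e). p \<in> S \<and> e \<in> M \<and> fst e < p \<and> p < snd e}"

definition enclosing_chords :: "(nat \<times> nat) set \<Rightarrow> nat \<Rightarrow> (nat \<times> nat) set" where
  "enclosing_chords M p = {e \<in> M. fst e < p \<and> p < snd e}"

lemma crossings_eq_card:
  "crossings (S, M) = card (free_crossings M) + card (tether_crossings S M)"
  by (simp add: crossings_def free_crossings_def tether_crossings_def)

lemma finite_free_crossings: "finite M \<Longrightarrow> finite (free_crossings M)"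
  by (rule finite_subset[of _ "M \<times> M"]) (auto simp: free_crossings_def)

lemma finite_tether_crossings: "finite S \<Longrightarrow> finite M \<Longrightarrow> finite (tether_crossings S M)"
  by (rule finite_subset[of _ "S \<times> M"]) (auto simp: tether_crossings_def)

lemma card_tether_crossings_insert:
  assumes "finite S" "finite M" "p \<notin> S"
  shows "card (tether_crossings (insert p S) M) = card (tether_crossings S M) + card (enclosing_chords M p)"
proof -
  have "tether_crossings (insert p S) M = tether_crossings S M \<union> Pair p ` enclosing_chords M p"
    by (auto simp: tether_crossings_def enclosing_chords_def)
  moreover have "tether_crossings S M \<inter> Pair p ` enclosing_chords M p = {}"
    using assms(3) by (auto simp: tether_crossings_def)
  ultimately show ?thesis
    using assms by (simp add: card_Un_disjoint finite_tether_crossings enclosing_chords_def card_image inj_on_def)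
qed

lemma card_free_crossings_insert_outer:
  assumes "finite M" "\<forall>e\<in>M. snd e < b"
  shows "card (free_crossings (insert (a, b) M)) = card (free_crossings M) + card (enclosing_chords M a)"
proof -
  have "free_crossings (insert (a, b) M) = free_crossings M \<union> (\<lambda>e. (e, (a, b))) ` enclosing_chords M a"
    using assms(2) by (fastforce simp: free_crossings_def enclosing_chords_def)
  moreover have "free_crossings M \<inter> (\<lambda>e. (e, (a, b))) ` enclosing_chords M a = {}"
    using assms(2) by (auto simp: free_crossings_def)
  ultimately show ?thesis
    using assms(1) by (simp add: card_Un_disjoint finite_free_crossings enclosing_chords_def card_image inj_on_def)
qed

lemma card_tether_crossings_insert_outer:
  assumes "finite S" "finite M" "\<forall>e\<in>M. snd e < b" "\<forall>p\<in>S. p < b"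
  shows "card (tether_crossings S (insert (a, b) M)) = card (tether_crossings S M) + card {p\<in>S. a < p}"
proof -
  have "tether_crossings S (insert (a, b) M) = tether_crossings S M \<union> (\<lambda>p. (p, (a, b))) ` {p\<in>S. a < p}"
    using assms(4) by (auto simp: tether_crossings_def)
  moreover have "tether_crossings S M \<inter> (\<lambda>p. (p, (a, b))) ` {p\<in>S. a < p} = {}"
    using assms(3) by (auto simp: tether_crossings_def)
  ultimately show ?thesis
    using assms(1,2) by (simp add: card_Un_disjoint finite_tether_crossings card_image inj_on_def)
qed

lemma crossings_insert_outer_tether:
  "\<forall>e\<in>M. snd e \<le> p \<Longrightarrow> crossings (insert p S, M) = crossings (S, M)"
proof -
  assume "\<forall>e\<in>M. snd e \<le> p"
  then have "tether_crossings (insert p S) M = tether_crossings S M"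
    by (fastforce simp: tether_crossings_def)
  then show ?thesis by (simp add: crossings_eq_card)
qed

text \<open>The chords enclosing \<open>a\<close> now cross \<open>(a, b)\<close> instead of the tether at \<open>a\<close>, and
  each tethered point to the right of \<open>a\<close> acquires a crossing with \<open>(a, b)\<close>.\<close>
lemma crossings_tether_to_chord:
  assumes "finite S" "finite M" "a \<in> S" "\<forall>e\<in>M. snd e < b" "\<forall>p\<in>S. p < b"
  shows "crossings (S - {a}, insert (a, b) M) = crossings (S, M) + card {p\<in>S. a < p}"
proof -
  have S: "S = insert a (S - {a})" using assms(3) by blast
  have "{p \<in> S - {a}. a < p} = {p\<in>S. a < p}" by auto
  then have "crossings (S - {a}, insert (a, b) M)
      = card (free_crossings M) + card (enclosing_chords M a)
        + card (tether_crossings (S - {a}) M) + card {p\<in>S. a < p}"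
    using assms by (simp add: crossings_eq_card card_free_crossings_insert_outer
        card_tether_crossings_insert_outer)
  also have "card (tether_crossings (S - {a}) M) + card (enclosing_chords M a) = card (tether_crossings S M)"
    using card_tether_crossings_insert[of "S - {a}" M a] assms(1,2) S by simp
  ultimately show ?thesis by (simp add: crossings_eq_card)
qed

lemma finite_chord_diagrams: "finite (chord_diagrams f n)"
proof -
  let ?I = "{1..2*f+n}"
  have "chord_diagrams f n \<subseteq> Pow ?I \<times> Pow (?I \<times> ?I)"
    unfolding chord_diagrams_def using perfect_matching_subset by fastforce
  then show ?thesis by (rule finite_subset) auto
qed

lemma chord_diagram_chord:
  assumes "(S, M) \<in> chord_diagrams f n" "(a, b) \<in> M"
  shows "1 \<le> a \<and> a < b \<and> b \<le> 2*f + n \<and> a \<notin> S \<and> b \<notin> S"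
  using assms perfect_matching_chord[of M "{1..2*f+n} - S" a b] by (simp add: chord_diagrams_def)

lemma chord_diagram_le:
  assumes "(S, M) \<in> chord_diagrams f n"
  shows "\<forall>e\<in>M. snd e \<le> 2*f + n" "\<forall>p\<in>S. p \<le> 2*f + n"
  using assms chord_diagram_chord[OF assms] by (auto simp: chord_diagrams_def)

lemma chord_diagram_no_tethers: "(S, M) \<in> chord_diagrams f 0 \<Longrightarrow> S = {}"
  by (auto simp: chord_diagrams_def dest: finite_subset)

lemma chord_diagram_no_free_chords: "(S, M) \<in> chord_diagrams 0 n \<Longrightarrow> S = {1..n}"
  by (simp add: chord_diagrams_def card_subset_eq)

lemma chord_diagram_finite:
  assumes "(S, M) \<in> chord_diagrams f n"
  shows "finite S" "finite M"
proof -
  have S: "S \<subseteq> {1..2*f+n}" and pm: "perfect_matching M ({1..2*f+n} - S)"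
    using assms by (simp_all add: chord_diagrams_def)
  show "finite S" using S by (rule finite_subset) simp
  show "finite M" using perfect_matching_subset[OF pm] by (rule finite_subset) simp
qed

lemma chord_diagram_last_point_chord:
  assumes D: "(S, M) \<in> chord_diagrams f n" and "2*f + n \<notin> S" "(f, n) \<noteq> (0, 0)"
  obtains a where "(a, 2*f + n) \<in> M"
proof -
  have pm: "perfect_matching M ({1..2*f+n} - S)" using D by (simp add: chord_diagrams_def)
  have "2*f + n \<in> {1..2*f+n} - S" using assms(2,3) by auto
  then obtain e where e: "e \<in> M" "2*f + n = fst e \<or> 2*f + n = snd e"
    using perfect_matching_cover[OF pm] by blast
  moreover have "fst e < snd e \<and> snd e \<le> 2*f + n"
    using chord_diagram_chord[OF D, of "fst e" "snd e"] e(1) by simp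
  ultimately have "(fst e, 2*f + n) \<in> M" by (cases e) auto
  then show ?thesis by (rule that)
qed

lemma chord_diagrams_0_0: "chord_diagrams 0 0 = {({}, {})}"
proof -
  have "perfect_matching {} {}" by (simp add: perfect_matching_def)
  moreover have "M = {}" if "perfect_matching M {}" for M
    using perfect_matching_subset[OF that] by auto
  ultimately show ?thesis by (auto simp: chord_diagrams_def)
qed

lemma T_0_0: "T 0 0 = 1"
  by (simp add: T_def chord_diagrams_0_0 crossings_def one_pCons monom_0)

lemma T_split_last_point:
  "T f n = (\<Sum>D\<in>{D\<in>chord_diagrams f n. 2*f + n \<in> fst D}. monom 1 (crossings D))
         + (\<Sum>D\<in>{D\<in>chord_diagrams f n. 2*f + n \<notin> fst D}. monom 1 (crossings D))"
proof -
  have "T f n = (\<Sum>D\<in>chord_diagrams f n \<inter> {D. 2*f + n \<in> fst D}. monom 1 (crossings D))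
              + (\<Sum>D\<in>chord_diagrams f n - {D. 2*f + n \<in> fst D}. monom 1 (crossings D))"
    unfolding T_def by (rule sum.Int_Diff[OF finite_chord_diagrams])
  also have "chord_diagrams f n \<inter> {D. 2*f + n \<in> fst D} = {D\<in>chord_diagrams f n. 2*f + n \<in> fst D}"
    by auto
  also have "chord_diagrams f n - {D. 2*f + n \<in> fst D} = {D\<in>chord_diagrams f n. 2*f + n \<notin> fst D}"
    by auto
  finally show ?thesis .
qed

lemma bij_betw_insert_last_tether:
  fixes f n :: nat
  defines "N \<equiv> 2*f + Suc n"
  shows "bij_betw (\<lambda>(S, M). (insert N S, M))
           (chord_diagrams f n) {D\<in>chord_diagrams f (Suc n). N \<in> fst D}"
proof -
  have insert_mem: "N \<notin> S \<and> (insert N S, M) \<in> chord_diagrams f (Suc n)"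
    if "(S, M) \<in> chord_diagrams f n" for S M
  proof -
    have S: "S \<subseteq> {1..2*f+n}" "card S = n" "perfect_matching M ({1..2*f+n} - S)"
      using that by (simp_all add: chord_diagrams_def)
    then have "N \<notin> S" by (auto simp: N_def)
    moreover have "insert N S \<subseteq> {1..2*f + Suc n}" using S(1) by (auto simp: N_def)
    moreover have "card (insert N S) = Suc n"
      using S(1,2) \<open>N \<notin> S\<close> by (simp add: finite_subset)
    moreover have "{1..2*f + Suc n} - insert N S = {1..2*f+n} - S" by (auto simp: N_def)
    ultimately show ?thesis
      using S(3) by (simp add: chord_diagrams_def)
  qed
  have Diff_mem: "(S - {N}, M) \<in> chord_diagrams f n"
    if "(S, M) \<in> chord_diagrams f (Suc n)" "N \<in> S" for S M
  proof -
    have S: "S \<subseteq> {1..N}" "card S = Suc n" "perfect_matching M ({1..N} - S)"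
      using that by (simp_all add: chord_diagrams_def N_def)
    have "S - {N} \<subseteq> {1..2*f+n}" using S(1) by (auto simp: N_def le_Suc_eq)
    moreover have "card (S - {N}) = n" using S(1,2) that(2) by (simp add: finite_subset)
    moreover have "{1..2*f+n} - (S - {N}) = {1..N} - S" using that(2) by (auto simp: N_def le_Suc_eq)
    ultimately show ?thesis
      using S(3) by (simp add: chord_diagrams_def)
  qed
  show ?thesis
    by (rule bij_betw_byWitness[where f' = "\<lambda>(S, M). (S - {N}, M)"])
      (use insert_mem Diff_mem in \<open>auto simp: insert_absorb\<close>)
qed

lemma chord_diagram_tether_to_last_chord:
  assumes D: "(S, M) \<in> chord_diagrams f (Suc n)" and "a \<in> S"
  shows "(S - {a}, insert (a, 2 * Suc f + n) M) \<in> chord_diagrams (Suc f) n"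
proof -
  define K where "K = 2*f + Suc n"
  define N where "N = 2 * Suc f + n"
  have N: "N = Suc K" by (simp add: N_def K_def)
  have S: "S \<subseteq> {1..K}" "card S = Suc n" and pm: "perfect_matching M ({1..K} - S)"
    using D by (simp_all add: chord_diagrams_def K_def)
  have "{1..N} - (S - {a}) = insert a (insert N ({1..K} - S))"
    using S(1) \<open>a \<in> S\<close> by (auto simp: N)
  moreover have "perfect_matching (insert (a, N) M) (insert a (insert N ({1..K} - S)))"
    using S(1) \<open>a \<in> S\<close> by (intro perfect_matching_insert[OF pm]) (auto simp: N)
  moreover have "S - {a} \<subseteq> {1..N}" "card (S - {a}) = n"
    using S \<open>a \<in> S\<close> by (auto simp: N finite_subset)
  ultimately show ?thesis by (simp add: chord_diagrams_def N_def)
qed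

lemma chord_diagram_last_chord_to_tether:
  assumes D: "(S, M) \<in> chord_diagrams (Suc f) n" and "2 * Suc f + n \<notin> S"
  obtains a where "(a, 2 * Suc f + n) \<in> M" "a \<notin> S"
    "(insert a S, M - {(a, 2 * Suc f + n)}) \<in> chord_diagrams f (Suc n)"
proof -
  define K where "K = 2*f + Suc n"
  define N where "N = 2 * Suc f + n"
  have N: "N = Suc K" by (simp add: N_def K_def)
  have S: "S \<subseteq> {1..N}" "card S = n" and pm: "perfect_matching M ({1..N} - S)"
    using D by (simp_all add: chord_diagrams_def N_def)
  obtain a where a: "(a, N) \<in> M"
    using chord_diagram_last_point_chord[OF D] assms(2) by (auto simp: N_def)
  have "1 \<le> a" "a < N" "a \<notin> S"
    using chord_diagram_chord[OF D a[unfolded N_def]] by (auto simp: N_def)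
  have "N \<notin> S" using assms(2) by (simp add: N_def)
  then have "insert a S \<subseteq> {1..K}"
    using S(1) \<open>1 \<le> a\<close> \<open>a < N\<close> by (auto simp: N le_Suc_eq)
  moreover have "card (insert a S) = Suc n" using S \<open>a \<notin> S\<close> by (simp add: finite_subset)
  moreover have "{1..K} - insert a S = ({1..N} - S) - {a, N}" by (auto simp: N)
  ultimately have "(insert a S, M - {(a, N)}) \<in> chord_diagrams f (Suc n)"
    using perfect_matching_Diff[OF pm a] by (simp add: chord_diagrams_def K_def)
  then show ?thesis using that a \<open>a \<notin> S\<close> by (simp add: N_def)
qed

lemma bij_betw_tether_to_last_chord:
  fixes f n :: nat
  defines "N \<equiv> 2 * Suc f + n"
  shows "bij_betw (\<lambda>((S, M), a). (S - {a}, insert (a, N) M))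
           (Sigma (chord_diagrams f (Suc n)) fst) {D\<in>chord_diagrams (Suc f) n. N \<notin> fst D}"
proof (rule bij_betw_imageI)
  have no_last: "(x, N) \<notin> M" and not_last: "N \<notin> S"
    if "(S, M) \<in> chord_diagrams f (Suc n)" for S M x
    using chord_diagram_le[OF that] by (force simp: N_def)+
  have "((S, M), a) = ((S', M'), a')"
    if D: "(S, M) \<in> chord_diagrams f (Suc n)" "a \<in> S"
      and D': "(S', M') \<in> chord_diagrams f (Suc n)" "a' \<in> S'"
      and eq: "S - {a} = S' - {a'}" "insert (a, N) M = insert (a', N) M'" for S M a S' M' a'
  proof -
    have "a = a'" using eq(2) no_last[OF D'(1), of a] by blast
    moreover have "M = M'"
      using eq(2) no_last[OF D(1)] no_last[OF D'(1)] \<open>a = a'\<close> by (metis insert_ident)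
    moreover have "S = S'" using D(2) D'(2) eq(1) \<open>a = a'\<close> by blast
    ultimately show ?thesis by simp
  qed
  then show "inj_on (\<lambda>((S, M), a). (S - {a}, insert (a, N) M)) (Sigma (chord_diagrams f (Suc n)) fst)"
    unfolding inj_on_def by fastforce
  have onto: "(S, M) \<in> (\<lambda>((S, M), a). (S - {a}, insert (a, N) M)) ` Sigma (chord_diagrams f (Suc n)) fst"
    if D: "(S, M) \<in> chord_diagrams (Suc f) n" "N \<notin> S" for S M
  proof -
    obtain a where a: "(a, N) \<in> M" "a \<notin> S" "(insert a S, M - {(a, N)}) \<in> chord_diagrams f (Suc n)"
      using chord_diagram_last_chord_to_tether[OF D[unfolded N_def]] by (auto simp: N_def)
    have "((insert a S, M - {(a, N)}), a) \<in> Sigma (chord_diagrams f (Suc n)) fst"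
      using a(3) by simp
    moreover have "(S, M) = (\<lambda>((S, M), a). (S - {a}, insert (a, N) M)) ((insert a S, M - {(a, N)}), a)"
      using a(1,2) by (simp add: insert_absorb)
    ultimately show ?thesis unfolding image_iff by blast
  qed
  show "(\<lambda>((S, M), a). (S - {a}, insert (a, N) M)) ` Sigma (chord_diagrams f (Suc n)) fst
      = {D\<in>chord_diagrams (Suc f) n. N \<notin> fst D}"
  proof
    show "(\<lambda>((S, M), a). (S - {a}, insert (a, N) M)) ` Sigma (chord_diagrams f (Suc n)) fst
        \<subseteq> {D\<in>chord_diagrams (Suc f) n. N \<notin> fst D}"
      using chord_diagram_tether_to_last_chord not_last by (auto simp: N_def)
    show "{D\<in>chord_diagrams (Suc f) n. N \<notin> fst D}
        \<subseteq> (\<lambda>((S, M), a). (S - {a}, insert (a, N) M)) ` Sigma (chord_diagrams f (Suc n)) fst"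
      using onto by auto
  qed
qed

lemma sum_tethered_last_point_Suc:
  "(\<Sum>D\<in>{D\<in>chord_diagrams f (Suc n). 2*f + Suc n \<in> fst D}. monom 1 (crossings D)) = T f n"
proof -
  have "(\<Sum>D\<in>{D\<in>chord_diagrams f (Suc n). 2*f + Suc n \<in> fst D}. monom 1 (crossings D) :: nat poly)
      = (\<Sum>(S, M)\<in>chord_diagrams f n. monom 1 (crossings (insert (2*f + Suc n) S, M)))"
    using sum.reindex_bij_betw[OF bij_betw_insert_last_tether, symmetric]
    by (simp add: case_prod_unfold)
  also have "\<dots> = T f n"
    unfolding T_def
  proof (rule sum.cong[OF refl], clarify)
    fix S M assume "(S, M) \<in> chord_diagrams f n"
    then have "\<forall>e\<in>M. snd e \<le> 2*f + Suc n" using chord_diagram_le(1) by fastforce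
    then show "monom 1 (crossings (insert (2*f + Suc n) S, M)) = monom 1 (crossings (S, M))"
      by (simp add: crossings_insert_outer_tether)
  qed
  finally show ?thesis .
qed

lemma sum_free_last_point_Suc:
  "(\<Sum>D\<in>{D\<in>chord_diagrams (Suc f) n. 2 * Suc f + n \<notin> fst D}. monom 1 (crossings D))
     = qint (Suc n) * T f (Suc n)"
proof -
  let ?N = "2 * Suc f + n"
  let ?C = "chord_diagrams f (Suc n)"
  have summand: "monom 1 (crossings (S - {a}, insert (a, ?N) M))
      = (monom 1 (crossings (S, M)) * monom 1 (card {p\<in>S. a < p}) :: nat poly)"
    if D: "(S, M) \<in> ?C" "a \<in> S" for S M a
  proof -
    have "crossings (S - {a}, insert (a, ?N) M) = crossings (S, M) + card {p\<in>S. a < p}"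
      using chord_diagram_finite[OF D(1)] chord_diagram_le[OF D(1)] D(2)
      by (intro crossings_tether_to_chord) auto
    then show ?thesis by (simp add: mult_monom)
  qed
  have inner: "(\<Sum>a\<in>S. monom 1 (crossings (S, M)) * monom 1 (card {p\<in>S. a < p}))
      = (monom 1 (crossings (S, M)) * qint (Suc n) :: nat poly)"
    if D: "(S, M) \<in> ?C" for S M
  proof -
    have "(\<Sum>a\<in>S. monom 1 (card {p\<in>S. a < p})) = qint (Suc n)"
      using sum_monom_card_greater[OF chord_diagram_finite(1)[OF D]] D by (simp add: chord_diagrams_def)
    then show ?thesis by (simp only: sum_distrib_left[symmetric])
  qed
  have "(\<Sum>D\<in>{D\<in>chord_diagrams (Suc f) n. ?N \<notin> fst D}. monom 1 (crossings D) :: nat poly)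
      = (\<Sum>((S, M), a)\<in>Sigma ?C fst. monom 1 (crossings (S - {a}, insert (a, ?N) M)))"
    using sum.reindex_bij_betw[OF bij_betw_tether_to_last_chord, symmetric]
    by (simp add: case_prod_unfold)
  also have "\<dots> = (\<Sum>(D, a)\<in>Sigma ?C fst. monom 1 (crossings D) * monom 1 (card {p\<in>fst D. a < p}))"
    using summand by (intro sum.cong) auto
  also have "\<dots> = (\<Sum>D\<in>?C. \<Sum>a\<in>fst D. monom 1 (crossings D) * monom 1 (card {p\<in>fst D. a < p}))"
    using chord_diagram_finite(1) by (intro sum.Sigma[symmetric] finite_chord_diagrams) auto
  also have "\<dots> = (\<Sum>D\<in>?C. monom 1 (crossings D) * qint (Suc n))"
    using inner by (intro sum.cong) auto
  also have "\<dots> = qint (Suc n) * T f (Suc n)"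
    by (simp add: T_def sum_distrib_left mult.commute)
  finally show ?thesis .
qed

lemma sum_tethered_last_point:
  "(\<Sum>D\<in>{D\<in>chord_diagrams f n. 2*f + n \<in> fst D}. monom 1 (crossings D))
     = (if n \<ge> 1 then T f (n - 1) else 0)"
proof (cases n)
  case 0
  have empty: "{D\<in>chord_diagrams f 0. 2*f \<in> fst D} = {}"
    by (auto dest: chord_diagram_no_tethers)
  show ?thesis unfolding 0 add_0_right empty by simp
next
  case (Suc m)
  then show ?thesis using sum_tethered_last_point_Suc[of f m] by simp
qed

lemma sum_free_last_point:
  assumes "(f, n) \<noteq> (0, 0)"
  shows "(\<Sum>D\<in>{D\<in>chord_diagrams f n. 2*f + n \<notin> fst D}. monom 1 (crossings D))
     = (if f \<ge> 1 then qint (n + 1) * T (f - 1) (n + 1) else 0)"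
proof (cases f)
  case 0
  have empty: "{D\<in>chord_diagrams 0 n. n \<notin> fst D} = {}"
    using assms 0 by (auto dest: chord_diagram_no_free_chords)
  show ?thesis unfolding 0 mult_0_right add_0 empty by simp
next
  case (Suc g)
  then show ?thesis using sum_free_last_point_Suc[of g n] by simp
qed

theorem lemma2p4:
  shows "T 0 0 = 1 \<and>
    (\<forall>f n. (f, n) \<noteq> (0, 0) \<longrightarrow>
       T f n = (if n \<ge> 1 then T f (n - 1) else 0)
             + (if f \<ge> 1 then qint (n + 1) * T (f - 1) (n + 1) else 0))"
proof (intro conjI allI impI)
  show "T 0 0 = 1" by (rule T_0_0)
next
  fix f n :: nat
  assume "(f, n) \<noteq> (0, 0)"
  then show "T f n = (if n \<ge> 1 then T f (n - 1) else 0)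
             + (if f \<ge> 1 then qint (n + 1) * T (f - 1) (n + 1) else 0)"
    using T_split_last_point[of f n] sum_tethered_last_point[of f n] sum_free_last_point[of f n]
    by simp
qed

end
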